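(* Let $n\ge 1$, $N=\{1,\dots,n\}$, $A=[0,1]$, and let $f$ be an OWA mechanism with weights $w_1,\dots,w_n\in[0,1]$, $\sum_j w_j=1$. Then $f$ satisfies proportional fairness (PF) if and only if $w_j=\frac1n$ for all $j\in\{1,\dots,n\}$.
   Context: A mechanism is a map $f:A^n\to A$ from profiles $x=(x_i)_{i\in N}$ of reported locations to a facility location. An OWA mechanism with weights $w_1,\dots,w_n$ returns $f(x)=\sum_{j=1}^n w_j x_{\pi(j)}$, where $\pi$ is a permutation of $N$ with $x_{\pi(1)}\le\dots\le x_{\pi(n)}$. The mechanism $f$ satisfies PF if for every profile $x\in A^n$, every coalition $S\subseteq N$ (nonempty) and every $i\in S$, $|x_i - f(x)| \le 1-\frac{|S|}{n} + r_S$, where $r_S=\max_{j\in S}x_j-\min_{j\in S}x_j$. *)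

theory Defs
  imports "HOL-Analysis.Analysis"
begin

text \<open>Agents are indexed by 0..n-1 (i.e. N = {0..<n}); a profile is a function
  x :: nat => real, only its values on {0..<n} matter. Weights w j, j < n,
  correspond to w_{j+1} of the paper.\<close>

definition owa :: "nat \<Rightarrow> (nat \<Rightarrow> real) \<Rightarrow> (nat \<Rightarrow> real) \<Rightarrow> real" where
  "owa n w x = (\<Sum>j<n. w j * (sort (map x [0..<n])) ! j)"

definition r_coal :: "(nat \<Rightarrow> real) \<Rightarrow> nat set \<Rightarrow> real" where
  "r_coal x S = Max (x ` S) - Min (x ` S)"

definition PF :: "nat \<Rightarrow> ((nat \<Rightarrow> real) \<Rightarrow> real) \<Rightarrow> bool" where
  "PF n f \<longleftrightarrow> (\<forall>x. (\<forall>i<n. x i \<in> {0..1}) \<longrightarrow>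
     (\<forall>S. S \<subseteq> {0..<n} \<longrightarrow> S \<noteq> {} \<longrightarrow>
       (\<forall>i\<in>S. \<bar>x i - f x\<bar> \<le> 1 - real (card S) / real n + r_coal x S)))"

end

theory Submission
  imports Defs
begin

(* For uniform weights the OWA mechanism is the mean, and a coalition S of k agents
   with values in [a, b] pulls the mean into [k a / n, (k b + n - k) / n], which is
   within 1 - k/n + (b - a) of every member of S.
   Conversely, on the step profile with m zeros followed by n - m ones the OWA
   mechanism returns the tail sum w_m + ... + w_(n-1); PF for the coalition of the
   zeros and for the coalition of the ones forces this tail sum to be (n - m)/n,
   and consecutive differences give w_j = 1/n. *)

definition step_profile :: "nat \<Rightarrow> nat \<Rightarrow> real" where
  "step_profile m i = (if i < m then 0 else 1)"

lemma owa_const_weights: "owa n (\<lambda>_. c) x = c * (\<Sum>i<n. x i)"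
proof -
  have "(\<Sum>j<n. sort (map x [0..<n]) ! j) = sum_list (sort (map x [0..<n]))"
    by (simp add: sum_list_sum_nth atLeast0LessThan)
  also have "\<dots> = sum_list (map x [0..<n])"
    by (metis mset_sort sum_mset_sum_list)
  also have "\<dots> = (\<Sum>i<n. x i)"
    by (simp add: sum_list_distinct_conv_sum_set atLeast0LessThan)
  finally show ?thesis
    unfolding owa_def by (simp add: sum_distrib_left[symmetric])
qed

lemma owa_sorted_profile:
  assumes "sorted (map x [0..<n])"
  shows "owa n w x = (\<Sum>j<n. w j * x j)"
  unfolding owa_def sorted_sort_id[OF assms] by (intro sum.cong) auto

lemma owa_step_profile: "owa n w (step_profile m) = (\<Sum>j\<in>{m..<n}. w j)"
proof -
  have "sorted (map (step_profile m) [0..<n])"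
    by (auto simp: sorted_iff_nth_mono step_profile_def)
  then have "owa n w (step_profile m) = (\<Sum>j<n. if m \<le> j then w j else 0)"
    by (auto simp: owa_sorted_profile step_profile_def intro!: sum.cong)
  also have "\<dots> = (\<Sum>j\<in>{j\<in>{..<n}. m \<le> j}. w j)"
    by (rule sum.inter_filter[symmetric]) simp
  also have "{j\<in>{..<n}. m \<le> j} = {m..<n}"
    by auto
  finally show ?thesis .
qed

lemma r_coal_const:
  assumes "S \<noteq> {}" and "\<forall>i\<in>S. x i = c"
  shows "r_coal x S = 0"
proof -
  have "x ` S = {c}" using assms by auto
  then show ?thesis unfolding r_coal_def by simp
qed

lemma PF_D:
  assumes "PF n f" and "\<forall>i<n. x i \<in> {0..1}"
    and "S \<subseteq> {0..<n}" and "S \<noteq> {}" and "i \<in> S"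
  shows "\<bar>x i - f x\<bar> \<le> 1 - real (card S) / real n + r_coal x S"
  using assms unfolding PF_def by blast

lemma PF_owa_tail_sum:
  assumes "PF n (owa n w)" and "m \<le> n" and "0 < n"
  shows "(\<Sum>j\<in>{m..<n}. w j) = 1 - real m / real n"
proof (cases "m = n")
  case True
  then show ?thesis using assms(3) by simp
next
  case False
  let ?T = "\<Sum>j\<in>{m..<n}. w j"
  have range: "\<forall>i<n. step_profile m i \<in> {0..1}"
    by (simp add: step_profile_def)
  have "r_coal (step_profile m) {m..<n} = 0"
    using False assms(2) by (intro r_coal_const[where c = 1]) (auto simp: step_profile_def)
  then have "\<bar>1 - ?T\<bar> \<le> 1 - real (card {m..<n}) / real n"
    using PF_D[OF assms(1) range, of "{m..<n}" m] False assms(2)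
    by (simp add: owa_step_profile step_profile_def[of m m])
  then have lower: "\<bar>1 - ?T\<bar> \<le> real m / real n"
    using assms(2,3) by (simp add: of_nat_diff diff_divide_distrib)
  show ?thesis
  proof (cases "m = 0")
    case True
    then show ?thesis using lower by simp
  next
    case False
    have "r_coal (step_profile m) {0..<m} = 0"
      using False by (intro r_coal_const[where c = 0]) (auto simp: step_profile_def)
    then have "\<bar>0 - ?T\<bar> \<le> 1 - real (card {0..<m}) / real n"
      using PF_D[OF assms(1) range, of "{0..<m}" 0] False assms(2)
      by (simp add: owa_step_profile step_profile_def[of m 0])
    then show ?thesis using lower by simp
  qed
qed

lemma PF_owa_imp_uniform_weights:
  assumes "PF n (owa n w)" and "j < n"
  shows "w j = 1 / real n"
proof -
  have "w j = (\<Sum>i\<in>{j..<n}. w i) - (\<Sum>i\<in>{Suc j..<n}. w i)"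
    using assms(2) by (simp add: sum.atLeast_Suc_lessThan)
  also have "\<dots> = 1 / real n"
    using assms PF_owa_tail_sum[OF assms(1), of j] PF_owa_tail_sum[OF assms(1), of "Suc j"]
    by (simp add: diff_divide_distrib[symmetric])
  finally show ?thesis .
qed

lemma mean_deviation_le:
  assumes range: "\<forall>i<n. x i \<in> {0..1}"
    and S: "S \<subseteq> {0..<n}" "S \<noteq> {}" and "i \<in> S"
  shows "\<bar>x i - (\<Sum>i<n. x i) / real n\<bar> \<le> 1 - real (card S) / real n + r_coal x S"
proof -
  define a where "a = Min (x ` S)"
  define b where "b = Max (x ` S)"
  define q where "q = real (card S) / real n"
  have fin: "finite S" using S(1) finite_subset by blast
  have "n > 0" using S by auto
  have "card S \<le> n" using card_mono[OF _ S(1)] by simp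
  then have q: "0 \<le> q" "q \<le> 1"
    using \<open>n > 0\<close> by (auto simp: q_def)
  have xi: "a \<le> x i" "x i \<le> b"
    using fin \<open>i \<in> S\<close> by (auto simp: a_def b_def)
  have ab: "0 \<le> a" "b \<le> 1"
    using fin S range by (auto simp: a_def b_def subset_iff)
  have split: "(\<Sum>i<n. x i) = sum x S + sum x ({..<n} - S)"
    using S(1) by (simp add: atLeast0LessThan sum.subset_diff)
  have "real (card S) * a \<le> sum x S" "sum x S \<le> real (card S) * b"
    using fin by (auto simp: a_def b_def intro: sum_bounded_below sum_bounded_above)
  then have inside: "q * a \<le> sum x S / real n" "sum x S / real n \<le> q * b"
    using \<open>n > 0\<close> by (auto simp: q_def field_simps)
  have "card ({..<n} - S) = n - card S"
    using S(1) fin by (simp add: card_Diff_subset atLeast0LessThan)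
  then have "sum x ({..<n} - S) \<le> real n - real (card S)"
    using sum_bounded_above[of "{..<n} - S" x 1] range \<open>card S \<le> n\<close> by auto
  moreover have "0 \<le> sum x ({..<n} - S)"
    using range by (intro sum_nonneg) auto
  ultimately have outside: "0 \<le> sum x ({..<n} - S) / real n"
    "sum x ({..<n} - S) / real n \<le> 1 - q"
    using \<open>n > 0\<close> by (auto simp: q_def field_simps)
  have "a * (1 - q) \<le> 1 - q" "0 \<le> b * (1 - q)"
    using q ab xi by (auto intro: mult_left_le_one_le)
  then have "\<bar>x i - (\<Sum>i<n. x i) / real n\<bar> \<le> 1 - q + (b - a)"
    using inside outside xi unfolding split add_divide_distrib by (auto simp: algebra_simps)
  then show ?thesis
    by (simp add: q_def a_def b_def r_coal_def)
qed

theorem theorem4: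
  fixes n :: nat and w :: "nat \<Rightarrow> real"
  assumes "n \<ge> 1"
    and "\<forall>j<n. w j \<in> {0..1}"
    and "(\<Sum>j<n. w j) = 1"
  shows "PF n (owa n w) \<longleftrightarrow> (\<forall>j<n. w j = 1 / real n)"
proof
  assume "PF n (owa n w)"
  then show "\<forall>j<n. w j = 1 / real n"
    by (blast intro: PF_owa_imp_uniform_weights)
next
  assume "\<forall>j<n. w j = 1 / real n"
  then have "owa n w = owa n (\<lambda>_. 1 / real n)"
    unfolding owa_def by (intro ext sum.cong) auto
  then show "PF n (owa n w)"
    unfolding PF_def owa_const_weights by (auto intro: mean_deviation_le)
qed

end
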